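(* Let $a:\mathbb{R}^{4d}\to\mathbb{R}^d$, $a=a(x,y,\xi,\eta)$, have components in $BC^\infty(\mathbb{R}^{4d})$ and suppose there is $\delta\in[0,1)$ with $\|(\nabla_ya)(x,y,\xi,\eta)\|\le\delta$ for all $(x,y,\xi,\eta)$. Then: (1) for each $(x,\xi,\eta)$ the map $y\mapsto y+a(x,y,\xi,\eta)$ is a $C^\infty$-diffeomorphism of $\mathbb{R}^d$; (2) if $g(x,z,\xi,\eta)$ denotes its inverse (in $z$) and $D(x,z,\xi,\eta)$ the Jacobian determinant of $z\mapsto g(x,z,\xi,\eta)$, then $g(x,z,\xi,\eta)-z$ and $D$ belong to $BC^\infty(\mathbb{R}^{4d})$; (3) if moreover for some $\epsilon>0$, on $\mathcal M_\epsilon:=\{(x,y,\xi,\eta)\in\mathbb{R}^{4d}:|\eta|\le\epsilon|\xi|\}$ one has $|\partial^\alpha_{(x,y)}\partial^\beta_{(\xi,\eta)}a(x,y,\xi,\eta)|\le C_{\alpha\beta}\langle\xi\rangle^{-|\beta|}$ for all $(\alpha,\beta)\in\mathbb{N}^{2d}\times\mathbb{N}^{2d}$, then $g(x,z,\xi,\eta)-z$ and $D(x,z,\xi,\eta)$ satisfy similar inequalities for $(x,z,\xi,\eta)\in\mathcal M_\epsilon$.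
   Context: $\langle\xi\rangle=(1+|\xi|^2)^{1/2}$; $BC^\infty$ denotes smooth functions bounded together with all their derivatives; $\nabla_ya$ is the $d\times d$ matrix of partial derivatives of $a$ with respect to $y$, $\|\cdot\|$ the operator norm. *)

theory Defs
  imports "HOL-Analysis.Analysis"
begin

text \<open>Points of R^{4d} are represented as ((x,y),(xi,eta)) with x,y,xi,eta in R^d = real^'n.\<close>
type_synonym 'n pt = "((real^'n) \<times> (real^'n)) \<times> ((real^'n) \<times> (real^'n))"

fun dd :: "'a::real_normed_vector list \<Rightarrow> ('a \<Rightarrow> real) \<Rightarrow> 'a \<Rightarrow> real" where
  "dd [] f = f"
| "dd (v # vs) f = (\<lambda>x. frechet_derivative (dd vs f) (at x) v)"

definition BC_inf :: "('a::euclidean_space \<Rightarrow> real) \<Rightarrow> bool" where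
  "BC_inf f \<longleftrightarrow> (\<forall>vs. set vs \<subseteq> Basis \<longrightarrow>
      (\<forall>x. dd vs f differentiable (at x)) \<and> bounded (range (dd vs f)))"

definition smooth_map :: "('a::euclidean_space \<Rightarrow> 'b::euclidean_space) \<Rightarrow> bool" where
  "smooth_map f \<longleftrightarrow> (\<forall>vs. set vs \<subseteq> Basis \<longrightarrow> (\<forall>b\<in>Basis. \<forall>x.
      dd vs (\<lambda>y. f y \<bullet> b) differentiable (at x)))"

definition diffeo :: "('a::euclidean_space \<Rightarrow> 'a) \<Rightarrow> bool" where
  "diffeo f \<longleftrightarrow> bij f \<and> smooth_map f \<and> smooth_map (inv f)"

definition jbr :: "real^'n::finite \<Rightarrow> real" where
  "jbr \<xi> = sqrt (1 + (norm \<xi>)\<^sup>2)"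

definition Mset :: "real \<Rightarrow> 'n::finite pt set" where
  "Mset \<epsilon> = {p. norm (snd (snd p)) \<le> \<epsilon> * norm (fst (snd p))}"

text \<open>Symbol-type estimates on M_eps: for each multi-index (list of basis directions),
  |d^alpha_(x,y) d^beta_(xi,eta) f| <= C * <xi>^(-|beta|), where |beta| counts the
  directions lying in the (xi,eta) factor.\<close>
definition symbol_est :: "real \<Rightarrow> ('n::finite pt \<Rightarrow> real) \<Rightarrow> bool" where
  "symbol_est \<epsilon> f \<longleftrightarrow> (\<forall>vs. set vs \<subseteq> Basis \<longrightarrow> (\<exists>C. \<forall>p\<in>Mset \<epsilon>.
      \<bar>dd vs f p\<bar> \<le> C / jbr (fst (snd p)) ^ length (filter (\<lambda>v. fst v = 0) vs)))"

definition gmap :: "('n::finite pt \<Rightarrow> real^'n) \<Rightarrow> 'n pt \<Rightarrow> real^'n" where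
  "gmap a p = inv (\<lambda>y. y + a ((fst (fst p), y), snd p)) (snd (fst p))"

definition Dmap :: "('n::finite pt \<Rightarrow> real^'n) \<Rightarrow> 'n pt \<Rightarrow> real" where
  "Dmap a p = det (jacobian (\<lambda>z. gmap a ((fst (fst p), z), snd p)) (at (snd (fst p))))"

end

theory Submission
  imports Defs
begin

text \<open>Let \<open>shear (x, y, \<xi>, \<eta>) = (x, y + a (x, y, \<xi>, \<eta>), \<xi>, \<eta>)\<close>. Since \<open>y \<mapsto> a\<close> is a
  \<open>\<delta>\<close>-contraction, every slice \<open>y \<mapsto> y + a\<close> is bijective (Banach), so \<open>shear\<close> has an
  inverse \<open>G\<close> and \<open>g(x,z,\<xi>,\<eta>) - z = - a (G (x,z,\<xi>,\<eta>))\<close>. By the inverse function theorem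
  \<open>G\<close> is differentiable, its derivative being expressed through \<open>(I + \<nabla>\<^sub>y a)\<^sup>-\<^sup>1 \<circ> G\<close>, whose
  entries are bounded by \<open>1 / (1 - \<delta>)\<close>, and \<open>D = det ((I + \<nabla>\<^sub>y a)\<^sup>-\<^sup>1 \<circ> G)\<close>. Hence all
  derivatives of \<open>g - z\<close> and of \<open>D\<close> are polynomials in \<open>(\<partial>\<^sup>\<alpha> a) \<circ> G\<close> and these entries,
  and a derivative in a \<open>(\<xi>, \<eta>)\<close>-direction adds a \<open>(\<xi>, \<eta>)\<close>-derivative of \<open>a\<close> to every
  term. As \<open>G\<close> does not move \<open>(\<xi>, \<eta>)\<close>, it preserves \<open>M\<^sub>\<epsilon>\<close> and \<open>\<langle>\<xi>\<rangle>\<close>, so bounds of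
  either kind on the derivatives of \<open>a\<close> carry over.\<close>

section \<open>Iterated derivatives and inverse matrices\<close>

lemma frechet_derivative_add_apply:
  assumes "f differentiable (at p)" "g differentiable (at p)"
  shows "frechet_derivative (\<lambda>p. f p + g p) (at p) v
       = frechet_derivative f (at p) v + frechet_derivative g (at p) v"
proof -
  have "((\<lambda>p. f p + g p) has_derivative
      (\<lambda>v. frechet_derivative f (at p) v + frechet_derivative g (at p) v)) (at p)"
    using assms frechet_derivative_works by (blast intro: has_derivative_add)
  from fun_cong[OF frechet_derivative_at[OF this], of v] show ?thesis by simp
qed

lemma frechet_derivative_mult_apply:
  fixes f g :: "'a::real_normed_vector \<Rightarrow> real"
  assumes "f differentiable (at p)" "g differentiable (at p)"
  shows "frechet_derivative (\<lambda>p. f p * g p) (at p) v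
       = f p * frechet_derivative g (at p) v + frechet_derivative f (at p) v * g p"
proof -
  have "((\<lambda>p. f p * g p) has_derivative
      (\<lambda>v. f p * frechet_derivative g (at p) v + frechet_derivative f (at p) v * g p)) (at p)"
    using assms frechet_derivative_works by (blast intro: has_derivative_mult)
  from fun_cong[OF frechet_derivative_at[OF this], of v] show ?thesis by simp
qed

definition smooth :: "('a::euclidean_space \<Rightarrow> real) \<Rightarrow> bool" where
  "smooth f \<longleftrightarrow> (\<forall>vs. set vs \<subseteq> Basis \<longrightarrow> (\<forall>x. dd vs f differentiable (at x)))"

lemma smooth_dd_has_derivative:
  "smooth f \<Longrightarrow> set vs \<subseteq> Basis \<Longrightarrow>
     (dd vs f has_derivative frechet_derivative (dd vs f) (at x)) (at x)"
  unfolding smooth_def using frechet_derivative_works by blast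

lemma dd_add:
  assumes "smooth f" "smooth g" "set vs \<subseteq> Basis"
  shows "dd vs (\<lambda>x. f x + g x) = (\<lambda>x. dd vs f x + dd vs g x)"
  using assms(3)
proof (induction vs)
  case Nil then show ?case by simp
next
  case (Cons v vs)
  then have "set vs \<subseteq> Basis" by simp
  with assms(1,2) show ?case
    by (auto simp: Cons.IH smooth_def fun_eq_iff intro: frechet_derivative_add_apply)
qed

lemma smooth_add: "smooth f \<Longrightarrow> smooth g \<Longrightarrow> smooth (\<lambda>x. f x + g x)"
  by (simp add: smooth_def dd_add differentiable_add)

lemma dd_inner_right:
  "dd vs (\<lambda>y. y \<bullet> b) =
     (case vs of [] \<Rightarrow> (\<lambda>y. y \<bullet> b) | [v] \<Rightarrow> (\<lambda>_. v \<bullet> b) | _ \<Rightarrow> (\<lambda>_. 0))"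
proof (induction vs)
  case Nil then show ?case by simp
next
  case (Cons v vs)
  have "frechet_derivative (\<lambda>y. y \<bullet> b) (at x) = (\<lambda>y. y \<bullet> b)" for x
    by (rule frechet_derivative_at[symmetric]) (intro derivative_eq_intros, auto)
  then show ?case
    using Cons.IH by (auto split: list.split)
qed

lemma smooth_inner_right: "smooth (\<lambda>y. y \<bullet> b)"
  by (auto simp: smooth_def dd_inner_right split: list.split)

lemma det_differentiable:
  fixes N :: "'a::real_normed_vector \<Rightarrow> real^'n::finite^'n"
  assumes "\<And>i j. (\<lambda>p. N p $ i $ j) differentiable (at x)"
  shows "(\<lambda>p. det (N p)) differentiable (at x)"
proof -
  have "(\<lambda>p. \<Sum>s\<in>{s. s permutes (UNIV::'n set)}. of_int (sign s) * (\<Prod>i\<in>UNIV. N p $ i $ s i))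
      differentiable (at x)"
  proof (intro differentiable_sum differentiable_mult differentiable_const ballI)
    fix s :: "'n \<Rightarrow> 'n"
    have "((\<lambda>p. N p $ i $ s i) has_derivative (SOME D. ((\<lambda>p. N p $ i $ s i) has_derivative D) (at x)))
        (at x)" for i
      using someI_ex[OF assms[of i "s i", unfolded differentiable_def]] .
    from has_derivative_prod[where f="\<lambda>i p. N p $ i $ s i" and I=UNIV, OF this]
    show "(\<lambda>p. \<Prod>i\<in>UNIV. N p $ i $ s i) differentiable at x"
      unfolding differentiable_def by blast
  qed auto
  then show ?thesis unfolding det_def .
qed

lemma matrix_inv_right_left:
  fixes A :: "real^'n::finite^'n"
  assumes "invertible A"
  shows "A ** matrix_inv A = mat 1" "matrix_inv A ** A = mat 1"
  using someI_ex[OF assms[unfolded invertible_def]] unfolding matrix_inv_def by auto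

lemma matrix_inv_entry_cramer:
  fixes A :: "real^'n::finite^'n"
  assumes "invertible A"
  shows "matrix_inv A $ k $ i = det (\<chi> r c. if c = k then axis i 1 $ r else A $ r $ c) / det A"
proof -
  have "A *v (matrix_inv A *v axis i 1) = axis i 1"
    by (simp add: matrix_vector_mul_assoc matrix_inv_right_left[OF assms])
  then have "matrix_inv A *v axis i 1 = (\<chi> k. det (\<chi> r c. if c = k then axis i 1 $ r else A $ r $ c) / det A)"
    using cramer[OF invertible_det_nz[THEN iffD1, OF assms]] by blast
  moreover have "(matrix_inv A *v axis i 1) $ k = matrix_inv A $ k $ i"
    by (simp add: matrix_vector_mult_basis column_def)
  ultimately show ?thesis by simp
qed

lemma matrix_inv_entry_differentiable:
  fixes N :: "'a::real_normed_vector \<Rightarrow> real^'n::finite^'n"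
  assumes inv: "\<And>p. invertible (N p)" and diff: "\<And>p i j. (\<lambda>p. N p $ i $ j) differentiable (at p)"
  shows "(\<lambda>p. matrix_inv (N p) $ k $ i) differentiable (at x)"
proof -
  have "(\<lambda>p. det (\<chi> r c. if c = k then axis i 1 $ r else N p $ r $ c) / det (N p)) differentiable (at x)"
  proof (intro differentiable_divide det_differentiable)
    show "det (N x) \<noteq> 0" using inv invertible_det_nz by blast
    show "(\<lambda>p. (\<chi> r c. if c = k then axis i 1 $ r else N p $ r $ c) $ r $ c) differentiable (at x)" for r c
      by (cases "c = k") (simp_all add: diff)
  qed (simp add: diff)
  then show ?thesis by (simp add: matrix_inv_entry_cramer[OF inv])
qed

text \<open>Differentiating \<open>N\<^sup>-\<^sup>1 N = 1\<close> and multiplying by \<open>N\<^sup>-\<^sup>1\<close> from the right.\<close>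
lemma frechet_derivative_matrix_inv_entry:
  fixes N :: "'a::real_normed_vector \<Rightarrow> real^'n::finite^'n"
  assumes inv: "\<And>p. invertible (N p)" and diff: "\<And>p i j. (\<lambda>p. N p $ i $ j) differentiable (at p)"
  shows "frechet_derivative (\<lambda>p. matrix_inv (N p) $ i $ j) (at x) v =
     - (\<Sum>l\<in>UNIV. \<Sum>k\<in>UNIV. matrix_inv (N x) $ i $ l
          * frechet_derivative (\<lambda>p. N p $ l $ k) (at x) v * matrix_inv (N x) $ k $ j)"
proof -
  define M where "M p = matrix_inv (N p)" for p
  define DM where "DM i l = frechet_derivative (\<lambda>p. M p $ i $ l) (at x)" for i l
  define DN where "DN l k = frechet_derivative (\<lambda>p. N p $ l $ k) (at x)" for l k
  have left: "(\<Sum>l\<in>UNIV. M p $ i $ l * N p $ l $ k) = (if i = k then 1 else 0)"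
    and right: "(\<Sum>k\<in>UNIV. N p $ l $ k * M p $ k $ j) = (if l = j then 1 else 0)" for p i k l j
    using matrix_inv_right_left[OF inv, of p]
    by (simp_all add: M_def matrix_matrix_mult_def mat_def vec_eq_iff)
  have hM: "((\<lambda>p. M p $ i $ l) has_derivative DM i l) (at x)" for i l
    unfolding M_def DM_def frechet_derivative_works[symmetric]
    by (rule matrix_inv_entry_differentiable[OF inv diff])
  have hN: "((\<lambda>p. N p $ l $ k) has_derivative DN l k) (at x)" for l k
    unfolding DN_def frechet_derivative_works[symmetric] by (rule diff)
  have DM_N: "(\<Sum>l\<in>UNIV. DM i l v * N x $ l $ k) = - (\<Sum>l\<in>UNIV. M x $ i $ l * DN l k v)" for k
  proof -
    have "((\<lambda>p. \<Sum>l\<in>UNIV. M p $ i $ l * N p $ l $ k) has_derivative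
        (\<lambda>v. \<Sum>l\<in>UNIV. M x $ i $ l * DN l k v + DM i l v * N x $ l $ k)) (at x)"
      by (intro has_derivative_sum has_derivative_mult hM hN)
    moreover have "((\<lambda>p. \<Sum>l\<in>UNIV. M p $ i $ l * N p $ l $ k) has_derivative (\<lambda>v. 0)) (at x)"
      by (simp add: left)
    ultimately have "(\<Sum>l\<in>UNIV. M x $ i $ l * DN l k v + DM i l v * N x $ l $ k) = 0"
      by (drule_tac has_derivative_unique) (auto dest: fun_cong[where x=v])
    then show ?thesis by (simp add: sum.distrib eq_neg_iff_add_eq_0 add.commute)
  qed
  have "DM i j v = (\<Sum>l\<in>UNIV. DM i l v * (\<Sum>k\<in>UNIV. N x $ l $ k * M x $ k $ j))"
    by (simp add: right if_distrib cong: if_cong)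
  also have "\<dots> = (\<Sum>k\<in>UNIV. (\<Sum>l\<in>UNIV. DM i l v * N x $ l $ k) * M x $ k $ j)"
    by (simp only: sum_distrib_left sum_distrib_right mult.assoc) (rule sum.swap)
  also have "\<dots> = - (\<Sum>l\<in>UNIV. \<Sum>k\<in>UNIV. M x $ i $ l * DN l k v * M x $ k $ j)"
    by (simp add: DM_N sum_distrib_right sum_negf) (rule sum.swap)
  finally show ?thesis by (simp add: DM_def DN_def M_def)
qed

definition inj_y :: "real^'n::finite \<Rightarrow> 'n pt" where "inj_y u = ((0, u), (0, 0))"
definition proj_y :: "'n::finite pt \<Rightarrow> real^'n" where "proj_y p = snd (fst p)"
definition drop_y :: "'n::finite pt \<Rightarrow> 'n pt" where "drop_y p = ((fst (fst p), 0), snd p)"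
definition set_y :: "'n::finite pt \<Rightarrow> real^'n \<Rightarrow> 'n pt" where "set_y p y = ((fst (fst p), y), snd p)"

lemma drop_y_plus_inj_y: "drop_y p + inj_y (proj_y p) = p"
  by (simp add: drop_y_def inj_y_def proj_y_def prod_eq_iff)

lemma set_y_proj_y [simp]: "set_y p (proj_y p) = p"
  by (simp add: set_y_def proj_y_def)

lemma proj_y_set_y [simp]: "proj_y (set_y p y) = y"
  by (simp add: set_y_def proj_y_def)

lemma set_y_set_y [simp]: "set_y (set_y p y) = set_y p"
  by (auto simp: set_y_def fun_eq_iff)

lemma proj_y_inj_y [simp]: "proj_y (inj_y u) = u"
  and drop_y_inj_y [simp]: "drop_y (inj_y u) = 0"
  by (simp_all add: proj_y_def drop_y_def inj_y_def zero_prod_def)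

lemma Basis_pt_cases:
  assumes "v \<in> (Basis :: 'n::finite pt set)"
  obtains "drop_y v = v" "proj_y v = 0"
    | "drop_y v = 0" "v = inj_y (proj_y v)" "proj_y v \<in> Basis"
  using assms by (auto simp: Basis_prod_def drop_y_def proj_y_def inj_y_def zero_prod_def)

lemma inj_y_Basis: "b \<in> Basis \<Longrightarrow> inj_y b \<in> (Basis :: 'n::finite pt set)"
  unfolding inj_y_def Basis_prod_def
  by (rule UnI1, rule image_eqI[where x="(0,b)"]) (auto simp: zero_prod_def)

lemma inj_y_image_Basis: "B \<subseteq> Basis \<Longrightarrow> inj_y ` B \<subseteq> (Basis :: 'n::finite pt set)"
  using inj_y_Basis by blast

lemma inj_y_axis_Basis: "inj_y (axis k 1) \<in> Basis"
  by (rule inj_y_Basis) (auto simp: Basis_vec_def)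

lemma linear_inj_y: "linear inj_y"
  by (auto simp: linear_iff inj_y_def)

lemma bounded_linear_inj_y: "bounded_linear inj_y"
  using linear_inj_y linear_conv_bounded_linear by blast

lemma inj_y_sum_axis: "inj_y u = (\<Sum>r\<in>UNIV. u $ r *\<^sub>R inj_y (axis r 1))"
proof -
  have "inj_y u = inj_y (\<Sum>r\<in>UNIV. u $ r *\<^sub>R axis r 1)"
    using basis_expansion[of u] by (simp add: scalar_mult_eq_scaleR)
  then show ?thesis
    by (simp add: linear_sum[OF linear_inj_y] linear_scale[OF linear_inj_y])
qed

lemma has_derivative_proj_y: "(proj_y has_derivative proj_y) (at p)"
  by (rule bounded_linear_imp_has_derivative) (auto simp: linear_iff proj_y_def
      intro: linear_conv_bounded_linear[THEN iffD1])

lemma has_derivative_set_y: "(set_y p has_derivative inj_y) (at y)"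
proof -
  have "set_y p = (\<lambda>y. drop_y p + inj_y y)"
    by (auto simp: set_y_def drop_y_def inj_y_def prod_eq_iff)
  then show ?thesis
    by (auto intro!: derivative_eq_intros bounded_linear.has_derivative[OF bounded_linear_inj_y])
qed

lemma dd_comp_set_y:
  assumes "smooth h" "set vs \<subseteq> Basis"
  shows "dd vs (\<lambda>y. h (set_y p y)) = (\<lambda>y. dd (map inj_y vs) h (set_y p y))"
  using assms(2)
proof (induction vs)
  case Nil then show ?case by simp
next
  case (Cons v vs)
  then have vs: "set vs \<subseteq> Basis" "set (map inj_y vs) \<subseteq> Basis"
    by (simp_all add: inj_y_image_Basis)
  have IH: "dd vs (\<lambda>y. h (set_y p y)) = (\<lambda>y. dd (map inj_y vs) h (set_y p y))"
    using Cons vs by simp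
  show ?case
  proof
    fix y
    have "((\<lambda>y. dd (map inj_y vs) h (set_y p y)) has_derivative
        (\<lambda>u. frechet_derivative (dd (map inj_y vs) h) (at (set_y p y)) (inj_y u))) (at y)"
      using diff_chain_at[OF has_derivative_set_y smooth_dd_has_derivative[OF assms(1) vs(2)]]
      by (simp add: o_def)
    from frechet_derivative_at[OF this, symmetric] show "dd (v # vs) (\<lambda>y. h (set_y p y)) y
        = dd (map inj_y (v # vs)) h (set_y p y)"
      by (simp add: IH)
  qed
qed

lemma smooth_comp_set_y:
  fixes h :: "'n::finite pt \<Rightarrow> real"
  shows "smooth h \<Longrightarrow> smooth (\<lambda>y. h (set_y p y))"
  unfolding smooth_def
proof (intro allI impI)
  fix vs :: "(real^'n) list" and y
  assume h: "\<forall>vs. set vs \<subseteq> Basis \<longrightarrow> (\<forall>x. dd vs h differentiable at x)"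
    and vs: "set vs \<subseteq> Basis"
  then have "smooth h" "set (map inj_y vs) \<subseteq> Basis"
    by (simp_all add: smooth_def inj_y_image_Basis)
  from diff_chain_at[OF has_derivative_set_y smooth_dd_has_derivative[OF this]]
  have "(\<lambda>y. dd (map inj_y vs) h (set_y p y)) differentiable (at y)"
    unfolding differentiable_def o_def by blast
  then show "dd vs (\<lambda>y. h (set_y p y)) differentiable at y"
    by (simp add: dd_comp_set_y[OF \<open>smooth h\<close> vs])
qed

lemma smooth_map_translate_slice:
  fixes r :: "'n::finite pt \<Rightarrow> real^'n"
  assumes "\<And>i. smooth (\<lambda>q. r q $ i)"
  shows "smooth_map (\<lambda>y. y + r (set_y p y))"
  unfolding smooth_map_def
proof (intro allI impI ballI)
  fix vs :: "(real^'n) list" and b :: "real^'n" and x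
  assume vs: "set vs \<subseteq> Basis" and "b \<in> Basis"
  then obtain i where i: "b = axis i 1" by (auto simp: Basis_vec_def)
  have "smooth (\<lambda>y. y \<bullet> b + r (set_y p y) $ i)"
    by (intro smooth_add smooth_inner_right smooth_comp_set_y assms)
  moreover have "(\<lambda>y. (y + r (set_y p y)) \<bullet> b) = (\<lambda>y. y \<bullet> b + r (set_y p y) $ i)"
    by (simp add: i inner_add_left cart_eq_inner_axis)
  ultimately show "dd vs (\<lambda>y. (y + r (set_y p y)) \<bullet> b) differentiable (at x)"
    using vs by (simp add: smooth_def)
qed

definition beta_order :: "'n::finite pt list \<Rightarrow> nat" where
  "beta_order vs = length (filter (\<lambda>v. fst v = 0) vs)"

lemma beta_order_Nil [simp]: "beta_order [] = 0"
  and beta_order_Cons: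
    "beta_order (v # vs) = (if fst v = 0 then Suc (beta_order vs) else beta_order vs)"
  by (simp_all add: beta_order_def)

lemma fst_inj_y_eq_0 [simp]: "fst (inj_y b) = 0 \<longleftrightarrow> b = 0"
  by (simp add: inj_y_def zero_prod_def)

section \<open>Weighted bounds\<close>

definition weight_bounded :: "'a set \<Rightarrow> ('a \<Rightarrow> real) \<Rightarrow> nat \<Rightarrow> ('a \<Rightarrow> real) \<Rightarrow> bool" where
  "weight_bounded S w k f \<longleftrightarrow> (\<exists>C. \<forall>p\<in>S. \<bar>f p\<bar> \<le> C * w p ^ k)"

lemma weight_bounded_const: "weight_bounded S w 0 (\<lambda>p. c)"
  unfolding weight_bounded_def by (intro exI[of _ "\<bar>c\<bar>"]) auto

lemma weight_bounded_zero: "weight_bounded S w k (\<lambda>p. 0)"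
  unfolding weight_bounded_def by (intro exI[of _ 0]) auto

lemma weight_bounded_add:
  assumes "weight_bounded S w k f" "weight_bounded S w k g"
  shows "weight_bounded S w k (\<lambda>p. f p + g p)"
proof -
  obtain C1 C2 where "\<forall>p\<in>S. \<bar>f p\<bar> \<le> C1 * w p ^ k" "\<forall>p\<in>S. \<bar>g p\<bar> \<le> C2 * w p ^ k"
    using assms unfolding weight_bounded_def by blast
  then have "\<forall>p\<in>S. \<bar>f p + g p\<bar> \<le> (C1 + C2) * w p ^ k"
    by (auto simp: distrib_right intro: order_trans[OF abs_triangle_ineq] add_mono)
  then show ?thesis unfolding weight_bounded_def by blast
qed

lemma weight_bounded_mult:
  assumes "weight_bounded S w k f" "weight_bounded S w l g"
  shows "weight_bounded S w (k + l) (\<lambda>p. f p * g p)"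
proof -
  obtain C1 C2 where C: "\<forall>p\<in>S. \<bar>f p\<bar> \<le> C1 * w p ^ k" "\<forall>p\<in>S. \<bar>g p\<bar> \<le> C2 * w p ^ l"
    using assms unfolding weight_bounded_def by blast
  have "\<bar>f p * g p\<bar> \<le> (C1 * C2) * w p ^ (k + l)" if "p \<in> S" for p
  proof -
    have "\<bar>f p\<bar> * \<bar>g p\<bar> \<le> (C1 * w p ^ k) * (C2 * w p ^ l)"
      using C that by (intro mult_mono) (auto intro: order_trans[OF abs_ge_zero])
    then show ?thesis by (simp add: abs_mult power_add mult_ac)
  qed
  then show ?thesis unfolding weight_bounded_def by blast
qed

lemma weight_bounded_mono:
  assumes w: "\<And>p. 0 \<le> w p" "\<And>p. w p \<le> 1" and "l \<le> k" "weight_bounded S w k f"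
  shows "weight_bounded S w l f"
proof -
  obtain C where C: "\<forall>p\<in>S. \<bar>f p\<bar> \<le> C * w p ^ k"
    using assms unfolding weight_bounded_def by blast
  have "\<bar>f p\<bar> \<le> max C 0 * w p ^ l" if "p \<in> S" for p
  proof -
    have "\<bar>f p\<bar> \<le> max C 0 * w p ^ k"
      using C that w by (meson max.cobounded1 mult_right_mono order_trans zero_le_power)
    also have "\<dots> \<le> max C 0 * w p ^ l"
      using power_decreasing[OF \<open>l \<le> k\<close> w] by (intro mult_left_mono) auto
    finally show ?thesis .
  qed
  then show ?thesis unfolding weight_bounded_def by blast
qed

lemma weight_bounded_comp:
  assumes "\<And>p. p \<in> S \<Longrightarrow> G p \<in> S \<and> w (G p) = w p" "weight_bounded S w k f"
  shows "weight_bounded S w k (\<lambda>p. f (G p))"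
  using assms unfolding weight_bounded_def by fastforce

section \<open>Inverting the shear\<close>

locale small_y_gradient =
  fixes a :: "'n::finite pt \<Rightarrow> real^'n" and \<delta> :: real
  assumes BC_inf_a: "\<And>j. BC_inf (\<lambda>p. a p $ j)"
    and \<delta>_nonneg: "0 \<le> \<delta>" and \<delta>_less_1: "\<delta> < 1"
    and onorm_y_derivative:
      "\<And>x y \<xi> \<eta>. onorm (frechet_derivative (\<lambda>y'. a ((x, y'), (\<xi>, \<eta>))) (at y)) \<le> \<delta>"
begin

abbreviation a_deriv :: "'n pt list \<Rightarrow> 'n \<Rightarrow> 'n pt \<Rightarrow> real" where
  "a_deriv vs j \<equiv> dd vs (\<lambda>q. a q $ j)"

definition Da :: "'n pt \<Rightarrow> 'n pt \<Rightarrow> real^'n" where "Da q = frechet_derivative a (at q)"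

lemma smooth_a: "smooth (\<lambda>p. a p $ j)"
  using BC_inf_a unfolding BC_inf_def smooth_def by blast

lemma a_deriv_differentiable: "set vs \<subseteq> Basis \<Longrightarrow> a_deriv vs j differentiable (at q)"
  using smooth_a unfolding smooth_def by blast

lemma has_derivative_a: "(a has_derivative Da q) (at q)"
proof -
  have "(\<lambda>p. a p \<bullet> axis k 1) differentiable (at q)" for k
    using a_deriv_differentiable[of "[]" k q] by (simp add: cart_eq_inner_axis[symmetric])
  then have "a differentiable (at q)"
    using differentiable_componentwise_within by (fastforce simp: Basis_vec_def)
  then show ?thesis unfolding Da_def frechet_derivative_works .
qed

lemma linear_Da: "linear (Da q)"
  using has_derivative_a has_derivative_linear by blast

lemma Da_component: "Da q u $ l = a_deriv [u] l q"
proof -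
  have "((\<lambda>p. a p $ l) has_derivative (\<lambda>u. Da q u $ l)) (at q)"
    using bounded_linear.has_derivative[OF bounded_linear_vec_nth has_derivative_a] .
  from fun_cong[OF frechet_derivative_at[OF this], of u] show ?thesis by simp
qed

lemma has_derivative_a_slice:
  "((\<lambda>y. a (set_y p y)) has_derivative (\<lambda>u. Da (set_y p y) (inj_y u))) (at y)"
  using diff_chain_at[OF has_derivative_set_y has_derivative_a] by (simp add: o_def)

lemma onorm_Da_inj_y: "onorm (\<lambda>u. Da q (inj_y u)) \<le> \<delta>"
proof -
  have "frechet_derivative (\<lambda>y. a (set_y q y)) (at (proj_y q)) = (\<lambda>u. Da q (inj_y u))"
    using frechet_derivative_at[OF has_derivative_a_slice, of q "proj_y q"] by simp
  moreover have "(\<lambda>y. a (set_y q y)) = (\<lambda>y'. a ((fst (fst q), y'), (fst (snd q), snd (snd q))))"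
    by (simp add: set_y_def)
  ultimately show ?thesis
    using onorm_y_derivative by metis
qed

lemma norm_Da_inj_y: "norm (Da q (inj_y u)) \<le> \<delta> * norm u"
proof -
  have "bounded_linear (\<lambda>u. Da q (inj_y u))"
    using has_derivative_a_slice[of q "proj_y q"] has_derivative_bounded_linear by fastforce
  from onorm[OF this] show ?thesis
    using onorm_Da_inj_y by (meson mult_right_mono norm_ge_zero order_trans)
qed

lemma a_slice_lipschitz: "norm (a (set_y p y1) - a (set_y p y2)) \<le> \<delta> * norm (y1 - y2)"
proof -
  have "((\<lambda>y. a (set_y p y)) has_derivative (\<lambda>u. Da (set_y p y) (inj_y u))) (at y within UNIV)" for y
    using has_derivative_a_slice by simp
  from differentiable_bound[OF convex_UNIV this onorm_Da_inj_y] show ?thesis by simp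
qed

definition slice :: "'n pt \<Rightarrow> real^'n \<Rightarrow> real^'n" where "slice p y = y + a (set_y p y)"

lemma slice_ex1: "\<exists>!y. slice p y = z"
proof -
  have "\<exists>!y. z - a (set_y p y) = y"
  proof (rule banach_fix_type[OF \<delta>_nonneg \<delta>_less_1], intro allI)
    fix y1 y2
    have "dist (z - a (set_y p y1)) (z - a (set_y p y2)) = norm (a (set_y p y1) - a (set_y p y2))"
      by (simp add: dist_norm norm_minus_commute)
    also have "\<dots> \<le> \<delta> * dist y1 y2" using a_slice_lipschitz by (simp add: dist_norm)
    finally show "dist (z - a (set_y p y1)) (z - a (set_y p y2)) \<le> \<delta> * dist y1 y2" .
  qed
  moreover have "z - a (set_y p y) = y \<longleftrightarrow> slice p y = z" for y
    by (auto simp: slice_def algebra_simps)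
  ultimately show ?thesis by simp
qed

lemma bij_slice: "bij (slice p)"
  unfolding bij_def inj_def surj_def using slice_ex1 by metis

lemma slice_set_y [simp]: "slice (set_y p y) = slice p"
  by (simp add: slice_def fun_eq_iff)

lemma gmap_eq_inv_slice: "gmap a p = inv (slice p) (proj_y p)"
  by (simp add: gmap_def slice_def[abs_def] set_y_def proj_y_def)

lemma slice_gmap: "slice p (gmap a p) = proj_y p"
  by (simp add: gmap_eq_inv_slice bij_is_surj[OF bij_slice] surj_f_inv_f)

definition shear :: "'n pt \<Rightarrow> 'n pt" where "shear q = q + inj_y (a q)"
definition shear_inv :: "'n pt \<Rightarrow> 'n pt" where "shear_inv p = set_y p (gmap a p)"

lemma shear_shear_inv: "shear (shear_inv p) = p"
proof -
  have "shear (shear_inv p) = set_y p (slice p (gmap a p))"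
    by (simp add: shear_def shear_inv_def slice_def set_y_def inj_y_def prod_eq_iff)
  then show ?thesis by (simp add: slice_gmap)
qed

lemma shear_inv_shear: "shear_inv (shear q) = q"
proof -
  have set_y_shear: "set_y (shear q) = set_y q"
    by (auto simp: shear_def set_y_def inj_y_def fun_eq_iff zero_prod_def)
  then have slice_shear: "slice (shear q) = slice q"
    by (simp add: slice_def fun_eq_iff)
  have "proj_y (shear q) = slice q (proj_y q)"
    by (simp add: shear_def slice_def inj_y_def proj_y_def set_y_def)
  then have "gmap a (shear q) = proj_y q"
    using bij_slice[of q] by (simp add: gmap_eq_inv_slice slice_shear bij_is_inj)
  then show ?thesis by (simp add: shear_inv_def set_y_shear)
qed

lemma snd_shear_inv: "snd (shear_inv p) = snd p"
  by (simp add: shear_inv_def set_y_def)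

lemma gmap_minus_proj_y: "gmap a p - proj_y p = - a (shear_inv p)"
  using slice_gmap[of p] by (simp add: slice_def shear_inv_def algebra_simps)

definition Jy :: "'n pt \<Rightarrow> real^'n^'n" where "Jy q = mat 1 + matrix (\<lambda>u. Da q (inj_y u))"

lemma Jy_mult: "Jy q *v u = u + Da q (inj_y u)"
proof -
  have "linear (\<lambda>u. Da q (inj_y u))"
    using linear_compose[OF linear_inj_y linear_Da] by (simp add: o_def)
  then show ?thesis by (simp add: Jy_def matrix_vector_mult_add_rdistrib)
qed

lemma Jy_mult_lower_bound: "(1 - \<delta>) * norm u \<le> norm (Jy q *v u)"
proof -
  have "norm u \<le> norm (Jy q *v u) + norm (Da q (inj_y u))"
    by (metis Jy_mult add_diff_cancel_right' norm_triangle_ineq4)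
  then show ?thesis using norm_Da_inj_y[of q u] by (simp add: algebra_simps)
qed

lemma invertible_Jy: "invertible (Jy q)"
proof -
  have "x = 0" if "Jy q *v x = 0" for x
  proof -
    have "(1 - \<delta>) * norm x \<le> 0" using Jy_mult_lower_bound[of x q] that by simp
    then show "x = 0" using \<delta>_less_1 by (simp add: mult_le_0_iff)
  qed
  then show ?thesis
    unfolding invertible_left_inverse matrix_left_invertible_ker by blast
qed

lemma Jy_inv_entry_bound: "\<bar>matrix_inv (Jy q) $ r $ k\<bar> \<le> 1 / (1 - \<delta>)"
proof -
  let ?c = "matrix_inv (Jy q) *v axis k 1"
  have "(1 - \<delta>) * norm ?c \<le> 1"
    using Jy_mult_lower_bound[of ?c q]
    by (simp add: matrix_vector_mul_assoc matrix_inv_right_left[OF invertible_Jy])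
  then have "norm ?c \<le> 1 / (1 - \<delta>)"
    using \<delta>_less_1 by (simp add: field_simps)
  moreover have "?c $ r = matrix_inv (Jy q) $ r $ k"
    by (simp add: matrix_vector_mult_basis column_def)
  ultimately show ?thesis using component_le_norm_cart[of ?c r] by simp
qed

lemma Jy_entry: "Jy q $ l $ k = (if l = k then 1 else 0) + a_deriv [inj_y (axis k 1)] l q"
  by (simp add: Jy_def mat_def matrix_def Da_component)

definition shear_inv_deriv :: "'n pt \<Rightarrow> 'n pt \<Rightarrow> 'n pt" where
  "shear_inv_deriv q v = drop_y v + inj_y (matrix_inv (Jy q) *v (proj_y v - Da q (drop_y v)))"

lemma has_derivative_shear: "(shear has_derivative (\<lambda>v. v + inj_y (Da q v))) (at q)"
  unfolding shear_def[abs_def]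
  by (intro has_derivative_add has_derivative_ident
      bounded_linear.has_derivative[OF bounded_linear_inj_y has_derivative_a])

lemma shear_deriv_shear_inv_deriv: "(\<lambda>v. v + inj_y (Da q v)) \<circ> shear_inv_deriv q = id"
proof
  fix v
  let ?u = "matrix_inv (Jy q) *v (proj_y v - Da q (drop_y v))"
  have "shear_inv_deriv q v + inj_y (Da q (shear_inv_deriv q v))
      = drop_y v + inj_y ?u + inj_y (Da q (drop_y v) + Da q (inj_y ?u))"
    by (simp add: shear_inv_deriv_def linear_add[OF linear_Da])
  also have "\<dots> = drop_y v + inj_y (?u + Da q (inj_y ?u) + Da q (drop_y v))"
    by (simp only: linear_add[OF linear_inj_y] add.assoc add.left_commute add.commute)
  also have "\<dots> = drop_y v + inj_y (Jy q *v ?u + Da q (drop_y v))"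
    by (simp only: Jy_mult)
  also have "\<dots> = v"
    by (simp add: matrix_vector_mul_assoc matrix_inv_right_left[OF invertible_Jy] drop_y_plus_inj_y)
  finally show "((\<lambda>v. v + inj_y (Da q v)) \<circ> shear_inv_deriv q) v = id v" by simp
qed

lemma has_derivative_shear_inv: "(shear_inv has_derivative shear_inv_deriv (shear_inv p)) (at p)"
proof -
  have "(shear_inv has_derivative shear_inv_deriv (shear_inv p)) (at (shear (shear_inv p)))"
    by (rule has_derivative_inverse_on[where S=UNIV and f'="\<lambda>q v. v + inj_y (Da q v)"])
       (auto simp: has_derivative_shear shear_inv_shear shear_deriv_shear_inv_deriv)
  then show ?thesis by (simp add: shear_shear_inv)
qed

lemma frechet_derivative_comp_shear_inv:
  assumes "\<And>q. h differentiable (at q)"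
  shows "frechet_derivative (\<lambda>p. h (shear_inv p)) (at p) v =
     frechet_derivative h (at (shear_inv p)) (drop_y v)
     + (\<Sum>r\<in>UNIV. (\<Sum>k\<in>UNIV. matrix_inv (Jy (shear_inv p)) $ r $ k
                       * (proj_y v - Da (shear_inv p) (drop_y v)) $ k)
                 * frechet_derivative h (at (shear_inv p)) (inj_y (axis r 1)))"
proof -
  let ?D = "frechet_derivative h (at (shear_inv p))"
  let ?u = "matrix_inv (Jy (shear_inv p)) *v (proj_y v - Da (shear_inv p) (drop_y v))"
  have dh: "(h has_derivative ?D) (at (shear_inv p))"
    using assms frechet_derivative_works by blast
  have l: "linear ?D" using dh has_derivative_linear by blast
  have "((\<lambda>p. h (shear_inv p)) has_derivative (\<lambda>v. ?D (shear_inv_deriv (shear_inv p) v))) (at p)"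
    using diff_chain_at[OF has_derivative_shear_inv dh] by (simp add: o_def)
  then have "frechet_derivative (\<lambda>p. h (shear_inv p)) (at p) v = ?D (shear_inv_deriv (shear_inv p) v)"
    by (simp add: frechet_derivative_at[symmetric])
  also have "\<dots> = ?D (drop_y v) + ?D (inj_y ?u)"
    by (simp add: shear_inv_deriv_def linear_add[OF l])
  also have "?D (inj_y ?u) = (\<Sum>r\<in>UNIV. ?u $ r * ?D (inj_y (axis r 1)))"
    by (subst inj_y_sum_axis) (simp add: linear_sum[OF l] linear_scale[OF l])
  finally show ?thesis by (simp add: matrix_vector_mult_def)
qed

lemma a_deriv_shear_inv_differentiable:
  "set vs \<subseteq> Basis \<Longrightarrow> (\<lambda>p. a_deriv vs j (shear_inv p)) differentiable (at p)"
  using differentiable_chain_at[OF _ a_deriv_differentiable] has_derivative_shear_inv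
  unfolding o_def differentiable_def by blast

lemma Jy_shear_inv_entry_differentiable: "(\<lambda>p. Jy (shear_inv p) $ l $ k) differentiable (at p)"
  unfolding Jy_entry
  by (intro differentiable_add differentiable_const a_deriv_shear_inv_differentiable)
     (simp add: inj_y_axis_Basis)

section \<open>Derivatives of the inverse\<close>

text \<open>\<open>(f, k) \<in> symbolic\<close>: \<open>f\<close> is a polynomial in the functions \<open>(\<partial>\<^sup>\<alpha> a\<^sub>j) \<circ> shear_inv\<close> and the
  entries of \<open>Jy\<^sup>-\<^sup>1 \<circ> shear_inv\<close>, each term of which contains at least \<open>k\<close> derivatives in
  the \<open>(\<xi>, \<eta>)\<close>-directions.\<close>
inductive_set symbolic :: "(('n pt \<Rightarrow> real) \<times> nat) set" where
  a_deriv: "set vs \<subseteq> Basis \<Longrightarrow> ((\<lambda>p. a_deriv vs j (shear_inv p)), beta_order vs) \<in> symbolic"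
| Jy_inv: "((\<lambda>p. matrix_inv (Jy (shear_inv p)) $ i $ k), 0) \<in> symbolic"
| const: "((\<lambda>p. c), 0) \<in> symbolic"
| zero: "((\<lambda>p. 0), n) \<in> symbolic"
| add: "(f, k) \<in> symbolic \<Longrightarrow> (g, k) \<in> symbolic \<Longrightarrow> ((\<lambda>p. f p + g p), k) \<in> symbolic"
| mult: "(f, k) \<in> symbolic \<Longrightarrow> (g, l) \<in> symbolic \<Longrightarrow> ((\<lambda>p. f p * g p), k + l) \<in> symbolic"
| weaken: "(f, k) \<in> symbolic \<Longrightarrow> l \<le> k \<Longrightarrow> (f, l) \<in> symbolic"

lemma symbolic_sum:
  "finite I \<Longrightarrow> (\<And>i. i \<in> I \<Longrightarrow> (f i, k) \<in> symbolic) \<Longrightarrow> ((\<lambda>p. \<Sum>i\<in>I. f i p), k) \<in> symbolic"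
  by (induction I rule: finite_induct) (auto intro: symbolic.zero symbolic.add)

lemma symbolic_prod:
  "finite I \<Longrightarrow> (\<And>i. i \<in> I \<Longrightarrow> (f i, 0) \<in> symbolic) \<Longrightarrow> ((\<lambda>p. \<Prod>i\<in>I. f i p), 0) \<in> symbolic"
  by (induction I rule: finite_induct) (auto intro: symbolic.const symbolic.mult[where k=0 and l=0, simplified])

lemma symbolic_scale: "(f, k) \<in> symbolic \<Longrightarrow> ((\<lambda>p. c * f p), k) \<in> symbolic"
  using symbolic.mult[OF symbolic.const] by fastforce

lemma a_deriv_drop_y_symbolic:
  assumes vs: "set vs \<subseteq> Basis" and v: "v \<in> Basis"
  shows "((\<lambda>p. frechet_derivative (a_deriv vs j) (at (shear_inv p)) (drop_y v)),
          beta_order vs + beta_order [v]) \<in> symbolic"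
  using v
proof (cases rule: Basis_pt_cases)
  case 1
  then show ?thesis
    using symbolic.a_deriv[of "v # vs" j] vs v by (simp add: beta_order_Cons split: if_splits)
next
  case 2
  then have "beta_order [v] = 0"
    using nonzero_Basis by (metis beta_order_Cons beta_order_Nil fst_inj_y_eq_0)
  with 2 show ?thesis
    using linear_0[OF linear_frechet_derivative[OF a_deriv_differentiable[OF vs]]]
    by (simp add: symbolic.zero)
qed

lemma y_component_shear_inv_deriv_symbolic:
  assumes v: "v \<in> Basis"
  shows "((\<lambda>p. (proj_y v - Da (shear_inv p) (drop_y v)) $ k), beta_order [v]) \<in> symbolic"
  using v
proof (cases rule: Basis_pt_cases)
  case 1
  have "((\<lambda>p. (-1) * a_deriv [v] k (shear_inv p)), beta_order [v]) \<in> symbolic"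
    by (intro symbolic_scale symbolic.a_deriv) (use v in simp)
  with 1 show ?thesis by (simp add: Da_component)
next
  case 2
  then have "beta_order [v] = 0"
    using nonzero_Basis by (metis beta_order_Cons beta_order_Nil fst_inj_y_eq_0)
  with 2 show ?thesis
    using linear_0[OF linear_Da] by (simp add: symbolic.const)
qed

lemma a_deriv_shear_inv_deriv_symbolic:
  assumes vs: "set vs \<subseteq> Basis" and v: "v \<in> Basis"
  shows "((\<lambda>p. frechet_derivative (\<lambda>p. a_deriv vs j (shear_inv p)) (at p) v),
          beta_order vs + beta_order [v]) \<in> symbolic"
proof -
  define W where "W k p = (proj_y v - Da (shear_inv p) (drop_y v)) $ k" for k p
  have "((\<lambda>p. (\<Sum>k\<in>UNIV. matrix_inv (Jy (shear_inv p)) $ r $ k * W k p)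
      * a_deriv (inj_y (axis r 1) # vs) j (shear_inv p)), beta_order vs + beta_order [v]) \<in> symbolic"
    for r
  proof -
    have "((\<lambda>p. \<Sum>k\<in>UNIV. matrix_inv (Jy (shear_inv p)) $ r $ k * W k p), beta_order [v])
        \<in> symbolic"
      unfolding W_def using symbolic.mult[OF symbolic.Jy_inv y_component_shear_inv_deriv_symbolic[OF v]]
      by (intro symbolic_sum) auto
    moreover have "((\<lambda>p. a_deriv (inj_y (axis r 1) # vs) j (shear_inv p)), beta_order vs) \<in> symbolic"
      using symbolic.a_deriv[of "inj_y (axis r 1) # vs" j] vs inj_y_axis_Basis[of r]
      by (simp add: beta_order_Cons)
    ultimately show ?thesis
      by (subst add.commute) (rule symbolic.mult)
  qed
  then have "((\<lambda>p. frechet_derivative (a_deriv vs j) (at (shear_inv p)) (drop_y v)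
      + (\<Sum>r\<in>UNIV. (\<Sum>k\<in>UNIV. matrix_inv (Jy (shear_inv p)) $ r $ k * W k p)
           * a_deriv (inj_y (axis r 1) # vs) j (shear_inv p))), beta_order vs + beta_order [v])
      \<in> symbolic"
    by (intro symbolic.add symbolic_sum a_deriv_drop_y_symbolic vs v) auto
  then show ?thesis
    unfolding frechet_derivative_comp_shear_inv[OF a_deriv_differentiable[OF vs]] W_def by simp
qed

lemma Jy_shear_inv_deriv_symbolic:
  assumes "v \<in> Basis"
  shows "((\<lambda>p. frechet_derivative (\<lambda>p. Jy (shear_inv p) $ l $ k) (at p) v), beta_order [v]) \<in> symbolic"
proof -
  have "(\<lambda>p. a_deriv [inj_y (axis k 1)] l (shear_inv p)) differentiable (at p)" for p
    by (rule a_deriv_shear_inv_differentiable) (simp add: inj_y_axis_Basis)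
  then have "frechet_derivative (\<lambda>p. Jy (shear_inv p) $ l $ k) (at p) v
      = frechet_derivative (\<lambda>p. a_deriv [inj_y (axis k 1)] l (shear_inv p)) (at p) v" for p
    by (simp add: Jy_entry frechet_derivative_add_apply[OF differentiable_const])
  then show ?thesis
    using a_deriv_shear_inv_deriv_symbolic[of "[inj_y (axis k 1)]" v l] assms
    by (simp add: inj_y_axis_Basis beta_order_Cons)
qed

lemma Jy_inv_shear_inv_deriv_symbolic:
  assumes "v \<in> Basis"
  shows "((\<lambda>p. frechet_derivative (\<lambda>p. matrix_inv (Jy (shear_inv p)) $ i $ j) (at p) v), beta_order [v])
    \<in> symbolic"
proof -
  have "((\<lambda>p. (-1) * (\<Sum>l\<in>UNIV. \<Sum>k\<in>UNIV. matrix_inv (Jy (shear_inv p)) $ i $ l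
      * frechet_derivative (\<lambda>p. Jy (shear_inv p) $ l $ k) (at p) v
      * matrix_inv (Jy (shear_inv p)) $ k $ j)), beta_order [v]) \<in> symbolic"
    using symbolic.mult[OF symbolic.mult[OF symbolic.Jy_inv Jy_shear_inv_deriv_symbolic[OF assms]]
        symbolic.Jy_inv]
    by (intro symbolic_scale symbolic_sum) auto
  then show ?thesis
    by (simp add: frechet_derivative_matrix_inv_entry[OF invertible_Jy Jy_shear_inv_entry_differentiable])
qed

lemma symbolic_differentiable: "(f, k) \<in> symbolic \<Longrightarrow> f differentiable (at p)"
  by (induction rule: symbolic.induct)
    (auto intro!: a_deriv_shear_inv_differentiable differentiable_add differentiable_mult
      matrix_inv_entry_differentiable[OF invertible_Jy Jy_shear_inv_entry_differentiable])

lemma symbolic_derivative: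
  assumes "(f, k) \<in> symbolic" and v: "v \<in> Basis"
  shows "((\<lambda>p. frechet_derivative f (at p) v), k + beta_order [v]) \<in> symbolic"
  using assms(1)
proof (induction rule: symbolic.induct)
  case (a_deriv vs j)
  then show ?case using a_deriv_shear_inv_deriv_symbolic v by blast
next
  case (Jy_inv i k)
  then show ?case using Jy_inv_shear_inv_deriv_symbolic v by simp
next
  case (const c)
  then show ?case by (simp add: symbolic.zero)
next
  case (zero n)
  then show ?case by (simp add: symbolic.zero)
next
  case (add f k g)
  then show ?case
    by (simp add: frechet_derivative_add_apply symbolic_differentiable symbolic.add)
next
  case (mult f k g l)
  have "((\<lambda>p. f p * frechet_derivative g (at p) v), k + (l + beta_order [v])) \<in> symbolic"
    "((\<lambda>p. frechet_derivative f (at p) v * g p), k + beta_order [v] + l) \<in> symbolic"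
    by (intro symbolic.mult mult)+
  then have "((\<lambda>p. f p * frechet_derivative g (at p) v + frechet_derivative f (at p) v * g p),
      k + l + beta_order [v]) \<in> symbolic"
    by (intro symbolic.add) (simp_all add: add_ac)
  with mult.hyps show ?case
    by (simp add: frechet_derivative_mult_apply symbolic_differentiable)
next
  case (weaken f k l)
  then show ?case by (auto intro: symbolic.weaken)
qed

lemma symbolic_dd:
  assumes "(f, k) \<in> symbolic" "set vs \<subseteq> Basis"
  shows "(dd vs f, k + beta_order vs) \<in> symbolic"
  using assms(2)
proof (induction vs)
  case Nil then show ?case using assms(1) by simp
next
  case (Cons v vs)
  then have "((\<lambda>p. frechet_derivative (dd vs f) (at p) v), k + beta_order vs + beta_order [v])
      \<in> symbolic"
    by (intro symbolic_derivative) auto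
  then show ?case by (simp add: beta_order_Cons split: if_splits)
qed

lemma symbolic_smooth: "(f, k) \<in> symbolic \<Longrightarrow> smooth f"
  unfolding smooth_def using symbolic_dd symbolic_differentiable by blast

lemma symbolic_weight_bounded:
  fixes S :: "'n pt set" and w :: "'n pt \<Rightarrow> real"
  assumes w: "\<And>p. 0 \<le> w p" "\<And>p. w p \<le> 1"
    and shear_inv_S: "\<And>p. p \<in> S \<Longrightarrow> shear_inv p \<in> S \<and> w (shear_inv p) = w p"
    and a_deriv_bounded:
      "\<And>j vs. set vs \<subseteq> Basis \<Longrightarrow> weight_bounded S w (beta_order vs) (a_deriv vs j)"
    and "(f, k) \<in> symbolic"
  shows "weight_bounded S w k f"
  using assms(5)
proof (induction rule: symbolic.induct)
  case (a_deriv vs j)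
  show ?case
    using shear_inv_S a_deriv_bounded[OF a_deriv] by (rule weight_bounded_comp)
next
  case (Jy_inv i k)
  show ?case
    unfolding weight_bounded_def by (intro exI[of _ "1 / (1 - \<delta>)"]) (simp add: Jy_inv_entry_bound)
next
  case (const c)
  show ?case by (rule weight_bounded_const)
next
  case (zero n)
  show ?case by (rule weight_bounded_zero)
next
  case (add f k g)
  show ?case using add.IH by (rule weight_bounded_add)
next
  case (mult f k g l)
  show ?case using mult.IH by (rule weight_bounded_mult)
next
  case (weaken f k l)
  show ?case using weaken.hyps(2) weaken.IH by (rule weight_bounded_mono[OF w])
qed

lemma symbolic_BC_inf:
  assumes "(f, 0) \<in> symbolic"
  shows "BC_inf f"
  unfolding BC_inf_def
proof (intro allI impI)
  fix vs :: "'n pt list" assume vs: "set vs \<subseteq> Basis"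
  have bounded_iff_weight: "bounded (range h) \<longleftrightarrow> weight_bounded UNIV (\<lambda>_. 1) k h"
    for k and h :: "'n pt \<Rightarrow> real"
    unfolding weight_bounded_def bounded_iff by simp
  have f_vs: "(dd vs f, beta_order vs) \<in> symbolic"
    using symbolic_dd[OF assms vs] by simp
  have "weight_bounded UNIV (\<lambda>_. 1) (beta_order vs) (dd vs f)"
  proof (rule symbolic_weight_bounded)
    show "weight_bounded UNIV (\<lambda>_. 1) (beta_order us) (a_deriv us j)" if "set us \<subseteq> Basis" for j us
      using BC_inf_a[of j] that bounded_iff_weight by (simp add: BC_inf_def)
  qed (simp_all add: f_vs)
  then have "bounded (range (dd vs f))"
    using bounded_iff_weight by blast
  moreover have "\<forall>x. dd vs f differentiable at x" using f_vs symbolic_differentiable by blast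
  ultimately show "(\<forall>x. dd vs f differentiable at x) \<and> bounded (range (dd vs f))" by blast
qed

lemma symbolic_symbol_est:
  assumes "(f, 0) \<in> symbolic" and a_est: "\<And>j. symbol_est \<epsilon> (\<lambda>p. a p $ j)"
  shows "symbol_est \<epsilon> f"
proof -
  define w :: "'n pt \<Rightarrow> real" where "w p = 1 / jbr (fst (snd p))" for p
  have jbr: "1 \<le> jbr \<xi>" for \<xi> :: "real^'n" by (simp add: jbr_def)
  have est_iff: "(\<exists>C. \<forall>p\<in>Mset \<epsilon>. \<bar>h p\<bar> \<le> C / jbr (fst (snd p)) ^ length (filter (\<lambda>v. fst v = 0) us))
      \<longleftrightarrow> weight_bounded (Mset \<epsilon>) w (beta_order us) h"
    for h :: "'n pt \<Rightarrow> real" and us :: "'n pt list"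
    unfolding weight_bounded_def
    by (simp add: w_def beta_order_def power_one_over divide_inverse power_inverse)
  show ?thesis
    unfolding symbol_est_def est_iff
  proof (intro allI impI)
    fix vs :: "'n pt list" assume vs: "set vs \<subseteq> Basis"
    show "weight_bounded (Mset \<epsilon>) w (beta_order vs) (dd vs f)"
    proof (rule symbolic_weight_bounded)
      show "0 \<le> w p" "w p \<le> 1" for p using jbr[of "fst (snd p)"] by (auto simp: w_def)
      show "shear_inv p \<in> Mset \<epsilon> \<and> w (shear_inv p) = w p" if "p \<in> Mset \<epsilon>" for p
        using that by (simp add: Mset_def w_def snd_shear_inv)
      show "weight_bounded (Mset \<epsilon>) w (beta_order us) (a_deriv us j)" if "set us \<subseteq> Basis" for j us
        using a_est[of j] that unfolding symbol_est_def est_iff by blast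
      show "(dd vs f, beta_order vs) \<in> symbolic"
        using symbolic_dd[OF assms(1) vs] by simp
    qed
  qed
qed

lemma gmap_minus_symbolic: "((\<lambda>p. (gmap a p - snd (fst p)) $ j), 0) \<in> symbolic"
proof -
  have "((\<lambda>p. (-1) * a_deriv [] j (shear_inv p)), 0) \<in> symbolic"
    using symbolic_scale[OF symbolic.a_deriv[of "[]"], of "-1" j] by simp
  moreover have "(gmap a p - snd (fst p)) $ j = (-1) * a_deriv [] j (shear_inv p)" for p
    using gmap_minus_proj_y[of p] by (simp add: proj_y_def)
  ultimately show ?thesis by simp
qed

lemma Dmap_eq_det: "Dmap a p = det (matrix_inv (Jy (shear_inv p)))"
proof -
  have g: "(\<lambda>z. gmap a ((fst (fst p), z), snd p)) = (\<lambda>z. proj_y (shear_inv (set_y p z)))"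
    by (simp add: shear_inv_def set_y_def proj_y_def)
  have "((\<lambda>z. shear_inv (set_y p z)) has_derivative (\<lambda>u. shear_inv_deriv (shear_inv p) (inj_y u)))
      (at (proj_y p))"
    using diff_chain_at[OF has_derivative_set_y, of shear_inv] has_derivative_shear_inv[of p]
    by (simp add: o_def)
  from diff_chain_at[OF this has_derivative_proj_y]
  have "((\<lambda>z. proj_y (shear_inv (set_y p z))) has_derivative (\<lambda>u. matrix_inv (Jy (shear_inv p)) *v u))
      (at (proj_y p))"
    by (simp add: o_def shear_inv_deriv_def linear_0[OF linear_Da])
  then show ?thesis
    unfolding Dmap_def jacobian_def g by (simp add: frechet_derivative_at[symmetric] proj_y_def)
qed

lemma Dmap_symbolic: "(Dmap a, 0) \<in> symbolic"
proof -
  have "((\<lambda>p. \<Sum>s\<in>{s. s permutes (UNIV::'n set)}.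
      of_int (sign s) * (\<Prod>i\<in>UNIV. matrix_inv (Jy (shear_inv p)) $ i $ s i)), 0) \<in> symbolic"
    by (intro symbolic_sum symbolic_scale symbolic_prod symbolic.Jy_inv finite_permutations
        finite_class.finite_UNIV)
  moreover have "Dmap a = (\<lambda>p. \<Sum>s\<in>{s. s permutes (UNIV::'n set)}.
      of_int (sign s) * (\<Prod>i\<in>UNIV. matrix_inv (Jy (shear_inv p)) $ i $ s i))"
    by (simp add: fun_eq_iff Dmap_eq_det det_def)
  ultimately show ?thesis by (simp only:)
qed

lemma diffeo_slice: "diffeo (slice p)"
proof -
  have "snd (fst (set_y p z)) = z" for z by (simp add: set_y_def)
  then have "inv (slice p) = (\<lambda>z. z + (gmap a (set_y p z) - snd (fst (set_y p z))))"
    by (simp add: fun_eq_iff gmap_eq_inv_slice)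
  moreover have "smooth_map (\<lambda>z. z + (gmap a (set_y p z) - snd (fst (set_y p z))))"
    using smooth_map_translate_slice[of "\<lambda>q. gmap a q - snd (fst q)" p]
      symbolic_smooth[OF gmap_minus_symbolic] by simp
  moreover have "smooth_map (slice p)"
    using smooth_map_translate_slice[OF smooth_a] by (simp add: slice_def[abs_def])
  ultimately show ?thesis unfolding diffeo_def using bij_slice by simp
qed

end

theorem lemma1p6:
  fixes a :: "'n::finite pt \<Rightarrow> real^'n" and \<delta> :: real
  assumes bc: "\<And>j. BC_inf (\<lambda>p. a p $ j)"
    and \<delta>: "0 \<le> \<delta>" "\<delta> < 1"
    and grad: "\<And>x y \<xi> \<eta>. onorm (frechet_derivative (\<lambda>y'. a ((x, y'), (\<xi>, \<eta>))) (at y)) \<le> \<delta>"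
  shows "(\<forall>x \<xi> \<eta>. diffeo (\<lambda>y. y + a ((x, y), (\<xi>, \<eta>))))
    \<and> (\<forall>j. BC_inf (\<lambda>p. (gmap a p - snd (fst p)) $ j))
    \<and> BC_inf (Dmap a)
    \<and> (\<forall>\<epsilon>>0. (\<forall>j. symbol_est \<epsilon> (\<lambda>p. a p $ j)) \<longrightarrow>
          (\<forall>j. symbol_est \<epsilon> (\<lambda>p. (gmap a p - snd (fst p)) $ j)) \<and> symbol_est \<epsilon> (Dmap a))"
proof -
  interpret small_y_gradient a \<delta> using assms by unfold_locales auto
  have "(\<lambda>y. y + a ((x, y), (\<xi>, \<eta>))) = slice ((x, 0), (\<xi>, \<eta>))" for x \<xi> \<eta>
    by (simp add: slice_def[abs_def] set_y_def)
  then show ?thesis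
    using diffeo_slice symbolic_BC_inf[OF gmap_minus_symbolic] symbolic_BC_inf[OF Dmap_symbolic]
      symbolic_symbol_est[OF gmap_minus_symbolic] symbolic_symbol_est[OF Dmap_symbolic]
    by auto
qed

end
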